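(* For every positive integer $m$ and every orthogonality graph $G$ in $\mathbb{S}^{d-1}$, the blow-up graph $G^{m}$ is an orthogonality graph in $\mathbb{S}^{2d-1}$.
   Context: $\mathbb{S}^{d-1}\subseteq\mathbb{R}^d$ is the set of unit vectors. A graph $G$ is an orthogonality graph in $S\subseteq\mathbb{R}^d$ if there is an injective map from $V(G)$ to $S$ such that adjacent vertices are mapped to orthogonal vectors (the representation need not be faithful). For a graph $G$ and positive integer $m$, the blow-up $G^m$ is obtained from $G$ by replacing each vertex by an independent set of size $m$ and each edge by a complete bipartite graph $K_{m,m}$ between the two corresponding independent sets. *)

theory Defs
  imports "HOL-Analysis.Analysis"
begin

definition simple_graph :: "'a set \<Rightarrow> ('a \<Rightarrow> 'a \<Rightarrow> bool) \<Rightarrow> bool" where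
  "simple_graph V E \<longleftrightarrow>
     (\<forall>u v. E u v \<longrightarrow> u \<in> V \<and> v \<in> V) \<and>
     (\<forall>u v. E u v \<longrightarrow> E v u) \<and>
     (\<forall>u. \<not> E u u)"

definition orth_graph :: "'a set \<Rightarrow> ('a \<Rightarrow> 'a \<Rightarrow> bool) \<Rightarrow> 'b::real_inner set \<Rightarrow> bool" where
  "orth_graph V E S \<longleftrightarrow>
     (\<exists>f. inj_on f V \<and> f ` V \<subseteq> S \<and> (\<forall>u\<in>V. \<forall>v\<in>V. E u v \<longrightarrow> inner (f u) (f v) = 0))"

definition blowup_vertices :: "'a set \<Rightarrow> nat \<Rightarrow> ('a \<times> nat) set" where
  "blowup_vertices V m = V \<times> {..<m}"

definition blowup_edges :: "('a \<Rightarrow> 'a \<Rightarrow> bool) \<Rightarrow> ('a \<times> nat) \<Rightarrow> ('a \<times> nat) \<Rightarrow> bool" where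
  "blowup_edges E x y \<longleftrightarrow> E (fst x) (fst y)"

end

theory Submission
  imports Defs
begin

text \<open>Send a vector x of the d-sphere at angle \<open>\<theta>\<close> to \<open>(cos \<theta> x, sin \<theta> x)\<close> on the
  2d-sphere. The inner product of the images of x at angle \<open>\<alpha>\<close> and y at angle \<open>\<beta>\<close> is
  \<open>cos (\<alpha> - \<beta>) \<langle>x, y\<rangle>\<close>, so orthogonality survives any choice of angles, while two
  images coincide only if \<open>\<alpha> - \<beta>\<close> is a multiple of \<open>\<pi>\<close> and x = y. Giving the m copies
  of each vertex the angles \<open>i / m\<close> therefore realises the blow-up.\<close>

lemma sum_UNIV_Plus:
  fixes h :: "'a::finite + 'b::finite \<Rightarrow> 'c::comm_monoid_add"
  shows "sum h UNIV = (\<Sum>j\<in>UNIV. h (Inl j)) + (\<Sum>j\<in>UNIV. h (Inr j))"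
  using sum.Plus[of "UNIV :: 'a set" "UNIV :: 'b set" h] by (simp add: comp_def)

definition angle_lift :: "real \<Rightarrow> real ^ 'd \<Rightarrow> real ^ ('d + 'd)" where
  "angle_lift \<theta> x = (\<chi> k. case k of Inl j \<Rightarrow> cos \<theta> * x $ j | Inr j \<Rightarrow> sin \<theta> * x $ j)"

lemma inner_angle_lift:
  "inner (angle_lift \<alpha> x) (angle_lift \<beta> y) = cos (\<alpha> - \<beta>) * inner x y"
proof -
  have "inner (angle_lift \<alpha> x) (angle_lift \<beta> y) =
      (\<Sum>j\<in>UNIV. cos \<alpha> * x $ j * (cos \<beta> * y $ j)) + (\<Sum>j\<in>UNIV. sin \<alpha> * x $ j * (sin \<beta> * y $ j))"
    unfolding inner_vec_def angle_lift_def sum_UNIV_Plus by simp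
  also have "\<dots> = (cos \<alpha> * cos \<beta> + sin \<alpha> * sin \<beta>) * inner x y"
    by (simp add: inner_vec_def sum_distrib_left algebra_simps sum.distrib)
  finally show ?thesis
    by (simp add: cos_diff)
qed

lemma norm_angle_lift [simp]: "norm (angle_lift \<theta> x) = norm x"
  by (simp add: norm_eq_sqrt_inner inner_angle_lift)

lemma angle_lift_eq_imp_eq:
  assumes "norm x = 1" "norm y = 1" "\<bar>\<alpha> - \<beta>\<bar> < pi"
    and "angle_lift \<alpha> x = angle_lift \<beta> y"
  shows "\<alpha> = \<beta> \<and> x = y"
proof -
  have unit: "inner x x = 1" "inner y y = 1"
    using assms(1,2) by (simp_all add: dot_square_norm)
  have cos_inner: "cos (\<alpha> - \<beta>) * inner x y = 1"
    using inner_angle_lift[of \<alpha> x \<beta> y] inner_angle_lift[of \<alpha> x \<alpha> x] assms(4) unit by simp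
  have "\<bar>inner x y\<bar> \<le> 1"
    using Cauchy_Schwarz_ineq2[of x y] assms(1,2) by simp
  moreover have "\<bar>cos (\<alpha> - \<beta>)\<bar> * \<bar>inner x y\<bar> = 1"
    using cos_inner by (metis abs_mult abs_one)
  ultimately have "\<bar>cos (\<alpha> - \<beta>)\<bar> = 1"
    using mult_left_le[of "\<bar>inner x y\<bar>" "\<bar>cos (\<alpha> - \<beta>)\<bar>"] abs_cos_le_one[of "\<alpha> - \<beta>"]
    by linarith
  then have "(cos (\<alpha> - \<beta>))\<^sup>2 = 1"
    by (metis power2_abs power_one)
  then have "sin (\<alpha> - \<beta>) = 0"
    using sin_cos_squared_add[of "\<alpha> - \<beta>"] by simp
  then have angles: "\<alpha> = \<beta>"
    using sin_eq_0_pi[of "\<alpha> - \<beta>"] assms(3) by simp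
  with cos_inner have "inner x y = 1"
    by simp
  with unit have "x = y"
    by (simp add: vector_eq[of x y])
  with angles show ?thesis ..
qed

lemma orth_graph_blowup_angles:
  fixes \<theta> :: "nat \<Rightarrow> real"
  assumes "orth_graph V E (sphere (0 :: real ^ 'd) 1)"
    and "inj_on \<theta> {..<m}"
    and "\<And>i j. i < m \<Longrightarrow> j < m \<Longrightarrow> \<bar>\<theta> i - \<theta> j\<bar> < pi"
  shows "orth_graph (blowup_vertices V m) (blowup_edges E) (sphere (0 :: real ^ ('d + 'd)) 1)"
proof -
  obtain f where inj: "inj_on f V" and unit: "f ` V \<subseteq> sphere (0 :: real ^ 'd) 1"
    and orth: "\<forall>u\<in>V. \<forall>v\<in>V. E u v \<longrightarrow> inner (f u) (f v) = 0"
    using assms(1) unfolding orth_graph_def by blast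
  define g where "g p = angle_lift (\<theta> (snd p)) (f (fst p))" for p
  have "inj_on g (blowup_vertices V m)"
  proof (rule inj_onI, clarify)
    fix u i v j
    assume "(u, i) \<in> blowup_vertices V m" "(v, j) \<in> blowup_vertices V m" "g (u, i) = g (v, j)"
    with unit assms(3) have "\<theta> i = \<theta> j \<and> f u = f v"
      by (intro angle_lift_eq_imp_eq) (auto simp: blowup_vertices_def g_def)
    with \<open>(u, i) \<in> _\<close> \<open>(v, j) \<in> _\<close> inj assms(2) show "u = v \<and> i = j"
      by (auto simp: blowup_vertices_def dest: inj_onD)
  qed
  moreover have "g ` blowup_vertices V m \<subseteq> sphere 0 1"
    using unit by (auto simp: blowup_vertices_def g_def)
  moreover have "\<forall>p\<in>blowup_vertices V m. \<forall>q\<in>blowup_vertices V m.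
      blowup_edges E p q \<longrightarrow> inner (g p) (g q) = 0"
    using orth by (auto simp: blowup_vertices_def blowup_edges_def g_def inner_angle_lift)
  ultimately show ?thesis
    unfolding orth_graph_def by blast
qed

theorem mainTheorem6:
  fixes V :: "'a set" and E :: "'a \<Rightarrow> 'a \<Rightarrow> bool" and m :: nat
  assumes "simple_graph V E"
    and "0 < m"
    and "orth_graph V E (sphere (0 :: real ^ 'd) 1)"
  shows "orth_graph (blowup_vertices V m) (blowup_edges E) (sphere (0 :: real ^ ('d + 'd)) 1)"
proof (rule orth_graph_blowup_angles[OF assms(3)])
  show "inj_on (\<lambda>i. real i / real m) {..<m}"
    using assms(2) by (auto intro: inj_onI)
  show "\<bar>real i / real m - real j / real m\<bar> < pi" if "i < m" "j < m" for i j
  proof -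
    have "\<bar>real i / real m - real j / real m\<bar> < 1"
      using that by (simp add: abs_less_iff field_simps)
    then show ?thesis
      using pi_gt3 by linarith
  qed
qed

end
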